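(* Assume the standing hypotheses (H). Then $d:=\sup\{\sqrt{x_1^2+x_2^2}:\ \mathbf{x}\in\operatorname{Supp}\rho\}<\infty$.
   Context: Standing hypotheses (H): $K\subset\mathbb{R}^3$ is a bounded axisymmetric domain (invariant under rotations about the $x_3$-axis) satisfying the no-trapping condition (whenever $(x,y,z)\notin K$, the half line $(x,y,z)+t(x,y,0)$, $t\ge0$, lies in $\mathbb{R}^3\setminus K$). $f:[0,\infty)\to[0,\infty)$ satisfies (F1) non-negative, continuous, strictly increasing for $s>0$; (F2) $\lim_{s\to0}f(s)s^{-4/3}=0$, $\lim_{s\to\infty}f(s)s^{-4/3}=\infty$; (F3) $\liminf_{s\to\infty}f(s)s^{-\gamma}>0$ for some $\gamma>4/3$; (F4) $f\in C^1(0,\infty)$ and $\liminf_{s\to0}f'(s)s^{-\mu}>0$ for some $\mu>0$. $A(s)=s\int_0^s\frac{f(t)}{t^2}dt$. For $q>3$, $\rho_K\in L^q(K)$ is non-negative and axisymmetric and $\Phi_K(\mathbf{x})=\int_K\frac{\rho_K(\mathbf{y})}{|\mathbf{x}-\mathbf{y}|}d\mathbf{y}$. $M>0$; $\Omega\ge1$ is a constant. For $\rho$ on $\mathbb{R}^3\setminus K$, $B\rho(\mathbf{x})=\int_{\mathbb{R}^3\setminus K}\frac{\rho(\mathbf{y})}{|\mathbf{x}-\mathbf{y}|}d\mathbf{y}$. $\rho:\mathbb{R}^3\setminus K\to[0,\infty)$ is bounded and continuous with $\int\rho=M$, and there is a constant $\lambda$ such that $A'(\rho)-B\rho-\frac12\Omega^2r^2-\Phi_K=\lambda$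 on $\{\rho>0\}$, where $r=\sqrt{x_1^2+x_2^2}$. *)

theory Defs
  imports "HOL-Analysis.Analysis" "HOL-Library.Liminf_Limsup"
begin

definition cyl_r :: "real^3 \<Rightarrow> real" where
  "cyl_r x = sqrt ((x$1)^2 + (x$2)^2)"

definition rot3 :: "real \<Rightarrow> real^3 \<Rightarrow> real^3" where
  "rot3 th x = vector [cos th * x$1 - sin th * x$2, sin th * x$1 + cos th * x$2, x$3]"

definition axisym_set :: "(real^3) set \<Rightarrow> bool" where
  "axisym_set S \<longleftrightarrow> (\<forall>th x. x \<in> S \<longleftrightarrow> rot3 th x \<in> S)"

definition axisym_fun_on :: "(real^3) set \<Rightarrow> (real^3 \<Rightarrow> real) \<Rightarrow> bool" where
  "axisym_fun_on S g \<longleftrightarrow> (\<forall>th x. x \<in> S \<longrightarrow> g (rot3 th x) = g x)"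

definition no_trapping :: "(real^3) set \<Rightarrow> bool" where
  "no_trapping K \<longleftrightarrow>
     (\<forall>x. x \<notin> K \<longrightarrow> (\<forall>t\<ge>0. x + t *\<^sub>R vector [x$1, x$2, 0] \<notin> K))"

definition Afun :: "(real \<Rightarrow> real) \<Rightarrow> real \<Rightarrow> real" where
  "Afun f s = s * integral {0..s} (\<lambda>t. f t / t^2)"

definition newton_pot :: "(real^3) set \<Rightarrow> (real^3 \<Rightarrow> real) \<Rightarrow> real^3 \<Rightarrow> real" where
  "newton_pot S g x = integral S (\<lambda>y. g y / dist x y)"

end

theory Submission
  imports Defs
begin

(* On the support of rho the Euler-Lagrange relation gives
     (1/2) Omega^2 r^2 = A'(rho) - B rho - Phi_K - lambda <= A'(rho) - lambda,
   because both Newtonian potentials of non-negative densities are non-negative.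
   Since rho is bounded by some R, it therefore suffices to bound A' on (0, R].
   For s > 0 one has A'(s) = int_0^s f(t)/t^2 dt + f(s)/s; the first term is
   monotone in s, and (F2) gives f(s) <= s^(4/3) near 0, which makes f(t)/t^2
   integrable at the origin and keeps f(s)/s bounded near 0. *)

text \<open>A continuous non-negative function dominated by t powr a with a > 1 near the
  origin has f(t)/t^2 integrable on a neighbourhood of 0: it is dominated by the
  integrable singularity t powr (a - 2).\<close>
lemma integrable_div_square_near_zero:
  fixes f :: "real \<Rightarrow> real"
  assumes nonneg: "\<forall>s\<ge>0. f s \<ge> 0" and cont: "continuous_on {0..} f"
    and a: "a > 1" and d: "d > 0"
    and small: "\<And>t. 0 < t \<Longrightarrow> t \<le> d \<Longrightarrow> f t \<le> t powr a"
  shows "(\<lambda>t. f t / t^2) integrable_on {0..d}"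
proof -
  have cont_g: "continuous_on {0<..d} (\<lambda>t. f t / t^2)"
    by (intro continuous_intros continuous_on_subset[OF cont]) auto
  have "(\<lambda>t. f t / t^2) absolutely_integrable_on {0<..d}"
  proof (rule measurable_bounded_by_integrable_imp_absolutely_integrable)
    show "(\<lambda>t. f t / t^2) \<in> borel_measurable (lebesgue_on {0<..d})"
      by (rule continuous_imp_measurable_on_sets_lebesgue[OF cont_g]) auto
    show "{0<..d} \<in> sets lebesgue" by auto
    show "(\<lambda>t. t powr (a - 2)) integrable_on {0<..d}"
      using integrable_on_powr_from_0'[of "a - 2" d] a d by auto
    fix t assume t: "t \<in> {0<..d}"
    have "f t / t^2 \<le> t powr a / t^2"
      using small t by (intro divide_right_mono) auto
    also have "\<dots> = t powr (a - 2)"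
      using t by (simp add: powr_diff flip: powr_numeral)
    finally show "norm (f t / t^2) \<le> t powr (a - 2)"
      using nonneg t by auto
  qed
  then have "(\<lambda>t. f t / t^2) integrable_on {0<..d}"
    by (rule set_lebesgue_integral_eq_integral(1))
  then show ?thesis
    by (rule integrable_spike_set) (auto intro: negligible_subset[of "{0}"])
qed

lemma integrable_div_square:
  fixes f :: "real \<Rightarrow> real"
  assumes nonneg: "\<forall>s\<ge>0. f s \<ge> 0" and cont: "continuous_on {0..} f"
    and lim0: "((\<lambda>s. f s / s powr (4/3)) \<longlongrightarrow> 0) (at_right 0)"
    and s: "s \<ge> 0"
  shows "(\<lambda>t. f t / t^2) integrable_on {0..s}"
proof -
  obtain b where b: "b > 0" "\<And>t. 0 < t \<Longrightarrow> t < b \<Longrightarrow> f t / t powr (4/3) < 1"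
    using order_tendstoD(2)[OF lim0, of 1] unfolding eventually_at_right_field by auto
  define d where "d = b / 2"
  have d: "d > 0" using b by (simp add: d_def)
  have "f t \<le> t powr (4/3)" if "0 < t" "t \<le> d" for t
    using b(2)[of t] that by (simp add: d_def field_simps)
  then have near0: "(\<lambda>t. f t / t^2) integrable_on {0..d}"
    by (intro integrable_div_square_near_zero[OF nonneg cont _ d]) auto
  show ?thesis
  proof (cases "s \<le> d")
    case True
    then show ?thesis using near0 s by (auto intro: integrable_on_subinterval)
  next
    case False
    have "(\<lambda>t. f t / t^2) integrable_on {d..s}"
      using d by (intro integrable_continuous_interval continuous_intros
          continuous_on_subset[OF cont]) auto
    then show ?thesis
      using False d near0 by (intro Henstock_Kurzweil_Integration.integrable_combine[of 0 d s]) auto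
  qed
qed

lemma integral_from_zero_has_derivative:
  fixes g :: "real \<Rightarrow> real"
  assumes int: "\<And>s. s \<ge> 0 \<Longrightarrow> g integrable_on {0..s}"
    and cont: "continuous_on {0<..} g" and s: "s > 0"
  shows "((\<lambda>x. integral {0..x} g) has_real_derivative g s) (at s)"
proof -
  have "((\<lambda>x. integral {s/2..x} g) has_real_derivative g s) (at s within {s/2..2 * s})"
    using s by (intro integral_has_real_derivative continuous_on_subset[OF cont]) auto
  then have "((\<lambda>x. integral {0..s/2} g + integral {s/2..x} g) has_real_derivative g s) (at s)"
    using s by (auto simp: at_within_Icc_at intro!: derivative_eq_intros)
  then show ?thesis
  proof (rule has_field_derivative_transform_within_open[where S="{s/2<..}"])
    fix x assume "x \<in> {s/2<..}"
    then show "integral {0..s/2} g + integral {s/2..x} g = integral {0..x} g"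
      using s int[of x] by (intro Henstock_Kurzweil_Integration.integral_combine) auto
  qed (use s in auto)
qed

lemma deriv_Afun:
  fixes f :: "real \<Rightarrow> real"
  assumes int: "\<And>s. s \<ge> 0 \<Longrightarrow> (\<lambda>t. f t / t^2) integrable_on {0..s}"
    and cont: "continuous_on {0<..} f" and s: "s > 0"
  shows "deriv (Afun f) s = integral {0..s} (\<lambda>t. f t / t^2) + f s / s"
proof -
  have "continuous_on {0<..} (\<lambda>t. f t / t^2)"
    by (intro continuous_intros cont) auto
  then have "((\<lambda>x. integral {0..x} (\<lambda>t. f t / t^2)) has_real_derivative f s / s^2) (at s)"
    using integral_from_zero_has_derivative[OF int _ s] by simp
  then have "(Afun f has_real_derivative
               1 * integral {0..s} (\<lambda>t. f t / t^2) + f s / s^2 * s) (at s)"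
    unfolding Afun_def by (rule DERIV_mult[OF DERIV_ident])
  moreover have "f s / s^2 * s = f s / s"
    using s by (simp add: power2_eq_square)
  ultimately show ?thesis
    by (simp add: DERIV_imp_deriv)
qed

text \<open>A continuous function on (0, R] that is bounded above near 0 is bounded
  above on all of (0, R], by compactness of the remaining interval.\<close>
lemma bounded_above_on_Ioc:
  fixes h :: "real \<Rightarrow> real"
  assumes cont: "continuous_on {0<..R} h"
    and near0: "eventually (\<lambda>s. h s \<le> B) (at_right 0)"
  shows "\<exists>C. \<forall>s\<in>{0<..R}. h s \<le> C"
proof -
  obtain d where d: "d > 0" "\<And>s. 0 < s \<Longrightarrow> s < d \<Longrightarrow> h s \<le> B"
    using near0 unfolding eventually_at_right_field by auto
  show ?thesis
  proof (cases "d/2 \<le> R")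
    case False
    then show ?thesis using d by (intro exI[of _ B]) auto
  next
    case True
    have "continuous_on {d/2..R} h"
      using d(1) by (intro continuous_on_subset[OF cont]) auto
    then obtain m where m: "\<And>s. s \<in> {d/2..R} \<Longrightarrow> h s \<le> h m"
      using continuous_attains_sup[OF compact_Icc] True by (metis atLeastAtMost_iff empty_iff)
    have "h s \<le> max B (h m)" if "s \<in> {0<..R}" for s
      using that d m[of s] by (cases "s < d") (auto simp: le_max_iff_disj)
    then show ?thesis by blast
  qed
qed

text \<open>Condition (F2) at 0 keeps f(s)/s at most 1 near the origin, since
  f(s) < s powr (4/3) <= s for small s.\<close>
lemma eventually_div_le_one:
  fixes f :: "real \<Rightarrow> real"
  assumes lim0: "((\<lambda>s. f s / s powr (4/3)) \<longlongrightarrow> 0) (at_right 0)"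
  shows "eventually (\<lambda>s. f s / s \<le> 1) (at_right 0)"
proof -
  have "eventually (\<lambda>s. f s / s powr (4/3) < 1) (at_right 0)"
    using order_tendstoD(2)[OF lim0] by simp
  moreover have "eventually (\<lambda>s. 0 < s \<and> s < 1) (at_right (0::real))"
    unfolding eventually_at_right_field by (intro exI[of _ 1]) auto
  ultimately have "eventually (\<lambda>s. f s / s powr (4/3) < 1 \<and> s < 1 \<and> s > 0) (at_right 0)"
    by eventually_elim auto
  then show ?thesis
  proof (rule eventually_mono)
    fix s assume s: "f s / s powr (4/3) < 1 \<and> s < 1 \<and> s > 0"
    have "f s < s powr (4/3)" using s by (auto simp: divide_less_eq)
    also have "\<dots> = s * s powr (1/3)"
      using s powr_add[of s 1 "1/3"] by simp
    also have "\<dots> \<le> s"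
      using s powr_mono2[of "1/3" s 1] by (intro mult_left_le) auto
    finally show "f s / s \<le> 1" using s by simp
  qed
qed

lemma deriv_Afun_bounded:
  fixes f :: "real \<Rightarrow> real"
  assumes nonneg: "\<forall>s\<ge>0. f s \<ge> 0" and cont: "continuous_on {0..} f"
    and lim0: "((\<lambda>s. f s / s powr (4/3)) \<longlongrightarrow> 0) (at_right 0)"
  shows "\<exists>C. \<forall>s\<in>{0<..R}. deriv (Afun f) s \<le> C"
proof -
  have int: "(\<lambda>t. f t / t^2) integrable_on {0..s}" if "s \<ge> 0" for s
    using integrable_div_square[OF nonneg cont lim0 that] .
  have cont_pos: "continuous_on {0<..} f"
    by (rule continuous_on_subset[OF cont]) auto
  have "continuous_on {0<..R} (\<lambda>s. f s / s)"
    by (intro continuous_intros continuous_on_subset[OF cont]) auto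
  then obtain B where B: "\<forall>s\<in>{0<..R}. f s / s \<le> B"
    using bounded_above_on_Ioc eventually_div_le_one[OF lim0] by blast
  have "deriv (Afun f) s \<le> integral {0..R} (\<lambda>t. f t / t^2) + B"
    if s: "s \<in> {0<..R}" for s
  proof -
    have "integral {0..s} (\<lambda>t. f t / t^2) \<le> integral {0..R} (\<lambda>t. f t / t^2)"
      using s int[of s] int[of R] nonneg by (intro integral_subset_le) auto
    moreover have "f s / s \<le> B"
      using B s by blast
    ultimately show ?thesis
      using deriv_Afun[OF int cont_pos, of s] s by simp
  qed
  then show ?thesis by blast
qed

text \<open>The Newtonian potential of a non-negative density is non-negative (also in
  the degenerate case where the defining integral does not exist).\<close>
lemma newton_pot_nonneg:
  assumes "\<And>y. y \<in> S \<Longrightarrow> g y \<ge> 0"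
  shows "newton_pot S g x \<ge> 0"
proof (cases "(\<lambda>y. g y / dist x y) integrable_on S")
  case True
  then show ?thesis unfolding newton_pot_def using assms by (intro integral_nonneg) auto
next
  case False
  then show ?thesis unfolding newton_pot_def by (simp add: not_integrable_integral)
qed

text \<open>Sub-level sets of the cylindrical radius are closed, so a radial bound on
  a set passes to its closure.\<close>
lemma cyl_r_bound_closure:
  assumes "\<And>x. x \<in> S \<Longrightarrow> cyl_r x \<le> D"
  shows "bdd_above (cyl_r ` closure S)"
proof -
  have "closed {x. cyl_r x \<le> D}"
    unfolding cyl_r_def by (intro closed_Collect_le continuous_intros)
  then have "closure S \<subseteq> {x. cyl_r x \<le> D}"
    using assms by (intro closure_minimal) auto
  then show ?thesis unfolding bdd_above_def by auto
qed

theorem mainTheorem11: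
  fixes K :: "(real^3) set" and f :: "real \<Rightarrow> real" and rhoK rho :: "real^3 \<Rightarrow> real"
    and q M \<Omega> \<gamma> \<mu> :: real
  assumes K_open: "open K" and K_conn: "connected K" and K_bdd: "bounded K"
    and K_axi: "axisym_set K" and K_notrap: "no_trapping K"
    and F1a: "\<forall>s\<ge>0. f s \<ge> 0" and F1b: "continuous_on {0..} f"
    and F1c: "strict_mono_on {0<..} f"
    and F2a: "((\<lambda>s. f s / s powr (4/3)) \<longlongrightarrow> 0) (at_right 0)"
    and F2b: "filterlim (\<lambda>s. f s / s powr (4/3)) at_top at_top"
    and F3: "\<gamma> > 4/3" "Liminf at_top (\<lambda>s. ereal (f s * s powr (-\<gamma>))) > 0"
    and F4a: "\<forall>s>0. f differentiable (at s)" and F4b: "continuous_on {0<..} (deriv f)"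
    and F4c: "\<mu> > 0" "Liminf (at_right 0) (\<lambda>s. ereal (deriv f s * s powr (-\<mu>))) > 0"
    and q: "q > 3"
    and rhoK_nonneg: "\<forall>y\<in>K. rhoK y \<ge> 0"
    and rhoK_Lq: "(\<lambda>y. rhoK y powr q) integrable_on K"
    and rhoK_axi: "axisym_fun_on K rhoK"
    and M: "M > 0" and Om: "\<Omega> \<ge> 1"
    and rho_nonneg: "\<forall>x\<in>-K. rho x \<ge> 0"
    and rho_bdd: "bounded (rho ` (-K))"
    and rho_cont: "continuous_on (-K) rho"
    and rho_mass: "(rho has_integral M) (-K)"
    and EL: "\<exists>lam. \<forall>x\<in>-K. rho x > 0 \<longrightarrow>
               deriv (Afun f) (rho x) - newton_pot (-K) rho x - 1/2 * \<Omega>^2 * (cyl_r x)^2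
                 - newton_pot K rhoK x = lam"
  shows "bdd_above (cyl_r ` closure {x\<in>-K. rho x > 0})"
proof -
  obtain R where R: "\<forall>x\<in>-K. \<bar>rho x\<bar> \<le> R"
    using rho_bdd unfolding bounded_real by auto
  obtain C where C: "\<forall>s\<in>{0<..R}. deriv (Afun f) s \<le> C"
    using deriv_Afun_bounded[OF F1a F1b F2a] by blast
  obtain lam where lam: "\<forall>x\<in>-K. rho x > 0 \<longrightarrow>
      deriv (Afun f) (rho x) - newton_pot (-K) rho x - 1/2 * \<Omega>^2 * (cyl_r x)^2
        - newton_pot K rhoK x = lam"
    using EL by blast
  have "cyl_r x \<le> sqrt (2 * (C - lam))" if x: "x \<in> -K" "rho x > 0" for x
  proof -
    have "newton_pot (-K) rho x \<ge> 0" "newton_pot K rhoK x \<ge> 0"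
      using rho_nonneg rhoK_nonneg by (auto intro: newton_pot_nonneg)
    moreover have "rho x \<le> R"
      using R x by (auto dest: abs_le_D1)
    then have "deriv (Afun f) (rho x) \<le> C"
      using C x by auto
    ultimately have "1/2 * \<Omega>^2 * (cyl_r x)^2 \<le> C - lam"
      using lam x by force
    moreover have "(cyl_r x)^2 \<le> \<Omega>^2 * (cyl_r x)^2"
      using Om by (simp add: mult_le_cancel_right1 one_le_power)
    ultimately have "(cyl_r x)^2 \<le> 2 * (C - lam)"
      by (simp add: field_simps)
    then show ?thesis
      by (rule real_le_rsqrt)
  qed
  then show ?thesis
    by (intro cyl_r_bound_closure) auto
qed

end
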